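(* Let $d,l,m\geq1$, fix arbitrary norms $\|\cdot\|$ on $H(d)$ and on $M_{lm}(\mathbb{R})$, and let $\mathcal{Q}=\{P_1,\dots,P_l\}$ be a measurement scheme of POVMs with outcome set $\{1,\dots,m\}$ which determines any pure state among all states. Then there is a constant $C_{\mathcal{Q}}>0$ such that for every $\epsilon>0$, every pure state $\sigma$ and every $f\in M_{lm}(\mathbb{R})$ with $\|f\|\leq\epsilon$, setting $b=M_{\mathcal{Q}}(\sigma)+f$, any minimizer $Y^*$ of the semidefinite program $$\text{minimize } \mathrm{tr}(Y)\quad\text{subject to } Y\in H(d),\ Y\geq0,\ \|M_{\mathcal{Q}}(Y)-b\|\leq\epsilon$$ satisfies $\|Y^*-\sigma\|\leq C_{\mathcal{Q}}\,\epsilon$.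
   Context: $H(d)$ is the real vector space of $d\times d$ complex Hermitian matrices and $M_{lm}(\mathbb{R})$ the real $l\times m$ matrices. A POVM with outcome set $\{1,\dots,m\}$ is a map $j\mapsto P(j)\in H(d)$ with $P(j)\geq0$ and $\sum_j P(j)=\mathbb{1}$. The scheme induces $M_{\mathcal{Q}}:H(d)\to M_{lm}(\mathbb{R})$, $M_{\mathcal{Q}}(X)_{i,j}=\mathrm{tr}(XP_i(j))$. A state is a positive semidefinite trace-one matrix; a pure state is a rank-one state $|\psi\rangle\langle\psi|$. $\mathcal{Q}$ determines any pure state among all states if for every pure state $\sigma$ and every state $\varrho$, $M_{\mathcal{Q}}(\sigma)=M_{\mathcal{Q}}(\varrho)$ implies $\varrho=\sigma$. *)

theory Defs
  imports "HOL-Analysis.Analysis"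
begin

text \<open>d x d complex matrices are represented as complex ^ 'd ^ 'd, with 'd a finite
index type of cardinality d.\<close>

definition hermitian :: "complex ^ 'd::finite ^ 'd \<Rightarrow> bool" where
  "hermitian X \<longleftrightarrow> (\<forall>i j. X $ i $ j = cnj (X $ j $ i))"

definition psd :: "complex ^ 'd::finite ^ 'd \<Rightarrow> bool" where
  "psd X \<longleftrightarrow> hermitian X \<and>
     (\<forall>v :: complex ^ 'd. 0 \<le> Re (\<Sum>i\<in>UNIV. \<Sum>j\<in>UNIV. cnj (v $ i) * X $ i $ j * v $ j))"

definition ctrace :: "complex ^ 'd ^ 'd \<Rightarrow> complex" where
  "ctrace X = (\<Sum>i\<in>UNIV. X $ i $ i)"

definition is_state :: "complex ^ 'd::finite ^ 'd \<Rightarrow> bool" where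
  "is_state X \<longleftrightarrow> psd X \<and> ctrace X = 1"

definition pure_state :: "complex ^ 'd::finite ^ 'd \<Rightarrow> bool" where
  "pure_state X \<longleftrightarrow> (\<exists>\<psi> :: complex ^ 'd. (\<Sum>i\<in>UNIV. (cmod (\<psi> $ i))\<^sup>2) = 1 \<and>
       X = (\<chi> i j. \<psi> $ i * cnj (\<psi> $ j)))"

definition is_norm_on :: "'a set \<Rightarrow> ('a::real_vector \<Rightarrow> real) \<Rightarrow> bool" where
  "is_norm_on S N \<longleftrightarrow>
     (\<forall>x\<in>S. 0 \<le> N x \<and> (N x = 0 \<longleftrightarrow> x = 0)) \<and>
     (\<forall>x\<in>S. \<forall>c::real. N (c *\<^sub>R x) = \<bar>c\<bar> * N x) \<and>
     (\<forall>x\<in>S. \<forall>y\<in>S. N (x + y) \<le> N x + N y)"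

definition povm :: "('m::finite \<Rightarrow> complex ^ 'd ^ 'd) \<Rightarrow> bool" where
  "povm P \<longleftrightarrow> (\<forall>j. psd (P j)) \<and> (\<Sum>j\<in>UNIV. P j) = mat 1"

definition meas_map :: "('l::finite \<Rightarrow> 'm::finite \<Rightarrow> complex ^ 'd ^ 'd) \<Rightarrow> complex ^ 'd ^ 'd \<Rightarrow> real ^ 'm ^ 'l" where
  "meas_map Q X = (\<chi> i j. Re (ctrace (X ** Q i j)))"

definition determines_pure :: "('l::finite \<Rightarrow> 'm::finite \<Rightarrow> complex ^ 'd ^ 'd) \<Rightarrow> bool" where
  "determines_pure Q \<longleftrightarrow> (\<forall>\<sigma> \<rho>. pure_state \<sigma> \<longrightarrow> is_state \<rho> \<longrightarrow>
       meas_map Q \<sigma> = meas_map Q \<rho> \<longrightarrow> \<rho> = \<sigma>)"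

definition sdp_feasible ::
  "('l::finite \<Rightarrow> 'm::finite \<Rightarrow> complex ^ 'd ^ 'd) \<Rightarrow> (real ^ 'm ^ 'l \<Rightarrow> real) \<Rightarrow> real ^ 'm ^ 'l \<Rightarrow> real
     \<Rightarrow> complex ^ 'd::finite ^ 'd \<Rightarrow> bool" where
  "sdp_feasible Q Nm b \<epsilon> Y \<longleftrightarrow> hermitian Y \<and> psd Y \<and> Nm (meas_map Q Y - b) \<le> \<epsilon>"

definition sdp_minimizer ::
  "('l::finite \<Rightarrow> 'm::finite \<Rightarrow> complex ^ 'd ^ 'd) \<Rightarrow> (real ^ 'm ^ 'l \<Rightarrow> real) \<Rightarrow> real ^ 'm ^ 'l \<Rightarrow> real
     \<Rightarrow> complex ^ 'd::finite ^ 'd \<Rightarrow> bool" where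
  "sdp_minimizer Q Nm b \<epsilon> Y \<longleftrightarrow> sdp_feasible Q Nm b \<epsilon> Y \<and>
     (\<forall>Z. sdp_feasible Q Nm b \<epsilon> Z \<longrightarrow> Re (ctrace Y) \<le> Re (ctrace Z))"

end

theory Submission
  imports Defs
begin

text \<open>Write a feasible \<open>Y\<close> as \<open>\<sigma> + D\<close> with \<open>\<sigma> = \<psi>\<psi>\<^sup>*\<close>. Since \<open>Y \<ge> 0\<close>, the Hermitian
  matrix \<open>D\<close> is positive semidefinite on the orthogonal complement of \<open>\<psi>\<close>, and the triangle
  inequality gives \<open>\<parallel>M(D)\<parallel> \<le> 2\<epsilon>\<close>. Such a \<open>D\<close> with \<open>M(D) = 0\<close> must vanish: it has at most
  one negative eigenvalue and trace 0, so adding a multiple of the projection onto its lowest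
  eigenvector and normalising yields a state with the measurements of a pure state, which
  the scheme then identifies. By compactness of the pairs \<open>(\<psi>, D)\<close> with \<open>\<parallel>\<psi>\<parallel> = \<parallel>D\<parallel> = 1\<close>,
  \<open>\<parallel>M(D)\<parallel> \<ge> c \<parallel>D\<parallel>\<close> uniformly, and equivalence of norms finishes the proof.\<close>

definition cinner :: "complex ^ 'd::finite \<Rightarrow> complex ^ 'd \<Rightarrow> complex" where
  "cinner u v = (\<Sum>i\<in>UNIV. cnj (u $ i) * v $ i)"

definition qform :: "complex ^ 'd::finite ^ 'd \<Rightarrow> complex ^ 'd \<Rightarrow> complex" where
  "qform X v = cinner v (X *v v)"

definition outer :: "complex ^ 'd::finite \<Rightarrow> complex ^ 'd ^ 'd" where
  "outer w = (\<chi> i j. w $ i * cnj (w $ j))"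

lemma scaleR_eq_smult: "r *\<^sub>R (u :: complex ^ 'd) = of_real r *s u"
  by (simp add: vec_eq_iff) (simp add: scaleR_conv_of_real)

lemma cinner_add_left: "cinner (u + v) w = cinner u w + cinner v w"
  by (simp add: cinner_def sum.distrib ring_distribs)

lemma cinner_add_right: "cinner w (u + v) = cinner w u + cinner w v"
  by (simp add: cinner_def sum.distrib ring_distribs)

lemma cinner_diff_right: "cinner w (u - v) = cinner w u - cinner w v"
  by (simp add: cinner_def sum_subtractf ring_distribs)

lemma cinner_smult_left: "cinner (c *s u) w = cnj c * cinner u w"
  by (simp add: cinner_def sum_distrib_left mult.assoc)

lemma cinner_smult_right: "cinner w (c *s u) = c * cinner w u"
  by (simp add: cinner_def sum_distrib_left algebra_simps)

lemma cinner_scaleR_left: "cinner (r *\<^sub>R u) w = of_real r * cinner u w"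
  by (simp add: scaleR_eq_smult cinner_smult_left)

lemma cinner_scaleR_right: "cinner w (r *\<^sub>R u) = of_real r * cinner w u"
  by (simp add: scaleR_eq_smult cinner_smult_right)

lemma cnj_cinner: "cnj (cinner u v) = cinner v u"
  by (simp add: cinner_def mult.commute)

lemma cinner_self: "cinner v v = of_real ((norm v)\<^sup>2)"
proof -
  have "cinner v v = (\<Sum>i\<in>UNIV. of_real ((cmod (v $ i))\<^sup>2))"
    unfolding cinner_def
    by (intro sum.cong refl) (metis complex_norm_square mult.commute)
  also have "\<dots> = of_real ((norm v)\<^sup>2)"
    by (simp add: norm_vec_def L2_set_def sum_nonneg)
  finally show ?thesis .
qed

lemma cnj_mult_self: "cnj c * c = of_real ((cmod c)\<^sup>2)"
  by (metis complex_norm_square mult.commute)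

lemma hermitianD: "hermitian X \<Longrightarrow> X $ i $ j = cnj (X $ j $ i)"
  unfolding hermitian_def by blast

lemma hermitian_add: "hermitian X \<Longrightarrow> hermitian Y \<Longrightarrow> hermitian (X + Y)"
  unfolding hermitian_def by (metis complex_cnj_add vector_add_component)

lemma hermitian_diff: "hermitian X \<Longrightarrow> hermitian Y \<Longrightarrow> hermitian (X - Y)"
  unfolding hermitian_def by (metis complex_cnj_diff vector_minus_component)

lemma hermitian_scaleR: "hermitian X \<Longrightarrow> hermitian (r *\<^sub>R X)"
  unfolding hermitian_def by (metis complex_cnj_scaleR vector_scaleR_component)

lemma hermitian_outer: "hermitian (outer w)"
  by (simp add: hermitian_def outer_def)

lemma hermitian_mat_1: "hermitian (mat 1 :: complex ^ 'd::finite ^ 'd)"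
  by (simp add: hermitian_def mat_def)

lemma hermitian_cinner_mult_vec:
  assumes "hermitian X"
  shows "cinner u (X *v v) = cinner (X *v u) v"
proof -
  have "cinner u (X *v v) = (\<Sum>i\<in>UNIV. \<Sum>j\<in>UNIV. cnj (u $ i) * X $ i $ j * v $ j)"
    by (simp add: cinner_def matrix_vector_mult_def sum_distrib_left mult.assoc)
  also have "\<dots> = (\<Sum>j\<in>UNIV. \<Sum>i\<in>UNIV. cnj (X $ j $ i * u $ i) * v $ j)"
  proof (subst sum.swap, intro sum.cong refl)
    fix i j
    show "cnj (u $ j) * X $ j $ i * v $ i = cnj (X $ i $ j * u $ j) * v $ i"
      by (simp add: hermitianD[OF assms, of j i])
  qed
  also have "\<dots> = cinner (X *v u) v"
    by (simp add: cinner_def matrix_vector_mult_def sum_distrib_right)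
  finally show ?thesis .
qed

lemma hermitian_trace_real:
  assumes "hermitian X"
  shows "ctrace X = of_real (Re (ctrace X))"
proof -
  have "Im (X $ i $ i) = 0" for i
    using hermitianD[OF assms, of i i] by (metis cnj.sel(2) equation_minus_iff neg_equal_zero)
  then show ?thesis by (simp add: complex_eq_iff ctrace_def Im_sum)
qed

lemma psd_iff_qform: "psd X \<longleftrightarrow> hermitian X \<and> (\<forall>v. 0 \<le> Re (qform X v))"
proof -
  have "(\<Sum>i\<in>UNIV. \<Sum>j\<in>UNIV. cnj (v $ i) * X $ i $ j * v $ j) = qform X v" for v
    by (simp add: qform_def cinner_def matrix_vector_mult_def sum_distrib_left mult.assoc)
  then show ?thesis unfolding psd_def by simp
qed

lemma mult_vec_smult: "(X :: complex ^ 'd::finite ^ 'd) *v (c *s v) = c *s (X *v v)"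
  by (simp add: vec_eq_iff matrix_vector_mult_def sum_distrib_left algebra_simps)

lemma mult_vec_scaleR: "(X :: complex ^ 'd::finite ^ 'd) *v (r *\<^sub>R v) = r *\<^sub>R (X *v v)"
  by (simp add: scaleR_eq_smult mult_vec_smult)

lemma scaleR_mult_vec: "(r *\<^sub>R (X :: complex ^ 'd::finite ^ 'd)) *v v = r *\<^sub>R (X *v v)"
  by (simp add: vec_eq_iff matrix_vector_mult_def scaleR_sum_right)

lemma outer_mult_vec: "outer w *v v = cinner w v *s w"
  by (simp add: outer_def matrix_vector_mult_def cinner_def vec_eq_iff sum_distrib_left algebra_simps)

lemma qform_add_vec: "qform X (u + v) = qform X u + qform X v + cinner u (X *v v) + cinner v (X *v u)"
  by (simp add: qform_def matrix_vector_right_distrib cinner_add_left cinner_add_right)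

lemma qform_smult: "qform X (c *s v) = cnj c * c * qform X v"
  by (simp add: qform_def mult_vec_smult cinner_smult_left cinner_smult_right)

lemma qform_scaleR: "qform X (r *\<^sub>R v) = of_real (r\<^sup>2) * qform X v"
  by (simp add: qform_def mult_vec_scaleR cinner_scaleR_left cinner_scaleR_right power2_eq_square)

lemma qform_add: "qform (X + Y) v = qform X v + qform Y v"
  by (simp add: qform_def matrix_vector_mult_add_rdistrib cinner_add_right)

lemma qform_diff: "qform (X - Y) v = qform X v - qform Y v"
  by (simp add: qform_def matrix_vector_mult_diff_rdistrib cinner_diff_right)

lemma qform_scaleR_mat: "qform (r *\<^sub>R X) v = of_real r * qform X v"
  by (simp add: qform_def scaleR_mult_vec cinner_scaleR_right)

lemma qform_mat_1: "qform (mat 1) v = of_real ((norm v)\<^sup>2)"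
  by (simp add: qform_def cinner_self)

lemma qform_outer: "qform (outer w) v = of_real ((cmod (cinner w v))\<^sup>2)"
proof -
  have "qform (outer w) v = cinner w v * cnj (cinner w v)"
    by (simp add: qform_def outer_mult_vec cinner_smult_right cnj_cinner)
  then show ?thesis by (metis complex_norm_square)
qed

lemma continuous_on_qform: "continuous_on S (\<lambda>v. Re (qform X v))"
  unfolding qform_def cinner_def matrix_vector_mult_def by (intro continuous_intros)

lemma psd_outer: "psd (outer w)"
  by (simp add: psd_iff_qform hermitian_outer qform_outer)

lemma psd_add: "psd X \<Longrightarrow> psd Y \<Longrightarrow> psd (X + Y)"
  by (simp add: psd_iff_qform hermitian_add qform_add)

lemma psd_scaleR: "psd X \<Longrightarrow> 0 \<le> r \<Longrightarrow> psd (r *\<^sub>R X)"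
  by (simp add: psd_iff_qform hermitian_scaleR qform_scaleR_mat)

lemma nonneg_quadratic_imp_linear_coeff_eq_0:
  fixes a c :: real
  assumes nonneg: "\<And>t. 0 \<le> 2 * t * c + t\<^sup>2 * a" and "0 \<le> a"
  shows "c = 0"
proof -
  define t where "t = - c / (a + 1)"
  have ta: "t * (a + 1) = - c" using \<open>0 \<le> a\<close> by (simp add: t_def)
  have "(a + 1)\<^sup>2 * (2 * t * c + t\<^sup>2 * a) = 2 * c * (t * (a + 1)) * (a + 1) + (t * (a + 1))\<^sup>2 * a"
    by (simp add: algebra_simps power2_eq_square)
  also have "\<dots> = - (c\<^sup>2 * (a + 2))"
    unfolding ta by (simp add: algebra_simps power2_eq_square)
  finally have "c\<^sup>2 * (a + 2) \<le> 0"
    using nonneg[of t] by (smt (verit) zero_le_mult_iff zero_le_power2)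
  then show "c = 0" using \<open>0 \<le> a\<close> by (simp add: mult_le_0_iff)
qed

lemma psd_qform_eq_0_imp_mult_vec_eq_0:
  assumes "psd B" and "Re (qform B w) = 0"
  shows "B *v w = 0"
proof -
  define u where "u = B *v w"
  have "0 \<le> 2 * t * (norm u)\<^sup>2 + t\<^sup>2 * Re (qform B u)" for t
  proof -
    have "cinner w (B *v (t *\<^sub>R u)) = cnj (cinner (t *\<^sub>R u) u)"
      using \<open>psd B\<close> by (simp add: psd_iff_qform hermitian_cinner_mult_vec cnj_cinner u_def)
    moreover have "0 \<le> Re (qform B (w + t *\<^sub>R u))" using \<open>psd B\<close> by (simp add: psd_iff_qform)
    ultimately show ?thesis
      using assms(2) by (simp add: qform_add_vec qform_scaleR cinner_scaleR_left cinner_self u_def)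
  qed
  moreover have "0 \<le> Re (qform B u)" using \<open>psd B\<close> by (simp add: psd_iff_qform)
  ultimately have "(norm u)\<^sup>2 = 0" by (rule nonneg_quadratic_imp_linear_coeff_eq_0)
  then show ?thesis by (simp add: u_def)
qed

section \<open>The smallest eigenvalue of a Hermitian matrix\<close>

lemma hermitian_min_eigenpair:
  assumes "hermitian X"
  obtains w \<mu> where "norm w = 1" "X *v w = of_real \<mu> *s w"
    "\<And>v. \<mu> * (norm v)\<^sup>2 \<le> Re (qform X v)"
proof -
  obtain w where w: "norm w = 1" "\<And>v. norm v = 1 \<Longrightarrow> Re (qform X w) \<le> Re (qform X v)"
    using continuous_attains_inf[OF compact_sphere _ continuous_on_qform, of 0 1 X] by auto
  define \<mu> where "\<mu> = Re (qform X w)"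
  have min: "\<mu> * (norm v)\<^sup>2 \<le> Re (qform X v)" for v
  proof (cases "v = 0")
    case True
    then show ?thesis by (simp add: qform_def cinner_def)
  next
    case False
    have "\<mu> \<le> Re (qform X ((1 / norm v) *\<^sub>R v))" using False by (simp add: w(2) \<mu>_def)
    also have "\<dots> = Re (qform X v) / (norm v)\<^sup>2" by (simp add: qform_scaleR power_divide)
    finally show ?thesis using False by (simp add: field_simps)
  qed
  have "psd (X - \<mu> *\<^sub>R mat 1)"
    using min by (simp add: psd_iff_qform hermitian_diff hermitian_scaleR hermitian_mat_1 assms
        qform_diff qform_scaleR_mat qform_mat_1)
  moreover have "Re (qform (X - \<mu> *\<^sub>R mat 1) w) = 0"
    by (simp add: qform_diff qform_scaleR_mat qform_mat_1 w(1) \<mu>_def)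
  ultimately have "(X - \<mu> *\<^sub>R mat 1) *v w = 0" by (rule psd_qform_eq_0_imp_mult_vec_eq_0)
  then have "X *v w = of_real \<mu> *s w"
    by (simp add: matrix_vector_mult_diff_rdistrib scaleR_mult_vec scaleR_eq_smult)
  then show thesis using that w(1) min by blast
qed

lemma qform_orth_eigen:
  assumes "hermitian X" and eig: "X *v w = of_real \<mu> *s w" and "norm w = 1"
    and orth: "cinner w v = 0"
  shows "qform X (\<alpha> *s v + \<beta> *s w) = cnj \<alpha> * \<alpha> * qform X v + cnj \<beta> * \<beta> * of_real \<mu>"
proof -
  have "cinner v w = 0" using orth cnj_cinner by (metis complex_cnj_zero)
  then have "cinner (\<alpha> *s v) (X *v (\<beta> *s w)) = 0"
    by (simp add: mult_vec_smult eig cinner_smult_left cinner_smult_right)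
  moreover have "cinner (\<beta> *s w) (X *v (\<alpha> *s v)) = 0"
    using \<open>hermitian X\<close> orth
    by (simp add: mult_vec_smult cinner_smult_left cinner_smult_right hermitian_cinner_mult_vec eig)
  moreover have "qform X w = of_real \<mu>"
    using \<open>norm w = 1\<close> by (simp add: qform_def eig cinner_smult_right cinner_self)
  ultimately show ?thesis by (simp add: qform_add_vec qform_smult)
qed

text \<open>The eigenvector \<open>w\<close> cannot lie in the complement of \<open>\<psi>\<close>, so \<open>\<langle>\<psi>,w\<rangle> v - \<langle>\<psi>,v\<rangle> w\<close>
  is a vector there, on which the form splits into a multiple of \<open>qform X v\<close> and a
  nonpositive term.\<close>

lemma nonneg_on_orth_neg_eigenvector:
  assumes "hermitian X"
    and nonneg_orth: "\<And>u. cinner \<psi> u = 0 \<Longrightarrow> 0 \<le> Re (qform X u)"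
    and eig: "X *v w = of_real \<mu> *s w" and "norm w = 1" and "\<mu> < 0"
    and orth: "cinner w v = 0"
  shows "0 \<le> Re (qform X v)"
proof -
  define a where "a = cinner \<psi> w"
  define b where "b = cinner \<psi> v"
  have "a \<noteq> 0"
  proof
    assume "a = 0"
    then have "0 \<le> Re (qform X w)" using nonneg_orth by (simp add: a_def)
    then show False
      using \<open>norm w = 1\<close> \<open>\<mu> < 0\<close> by (simp add: qform_def eig cinner_smult_right cinner_self)
  qed
  have "cinner \<psi> (a *s v + (- b) *s w) = 0"
    by (simp add: cinner_diff_right cinner_smult_right a_def b_def mult.commute)
  then have "0 \<le> Re (qform X (a *s v + (- b) *s w))" by (rule nonneg_orth)
  also have "\<dots> = (cmod a)\<^sup>2 * Re (qform X v) + (cmod b)\<^sup>2 * \<mu>"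
    using qform_orth_eigen[OF \<open>hermitian X\<close> eig \<open>norm w = 1\<close> orth, of a "- b"]
    by (simp add: cnj_mult_self flip: of_real_mult)
  finally have "0 \<le> (cmod a)\<^sup>2 * Re (qform X v) + (cmod b)\<^sup>2 * \<mu>" .
  moreover have "(cmod b)\<^sup>2 * \<mu> \<le> 0" using \<open>\<mu> < 0\<close> by (simp add: mult_nonneg_nonpos)
  moreover have "0 < (cmod a)\<^sup>2" using \<open>a \<noteq> 0\<close> by simp
  ultimately show ?thesis by (smt (verit) mult_pos_neg)
qed

lemma psd_diff_neg_eigen_outer:
  assumes "hermitian X"
    and nonneg_orth: "\<And>u. cinner \<psi> u = 0 \<Longrightarrow> 0 \<le> Re (qform X u)"
    and eig: "X *v w = of_real \<mu> *s w" and "norm w = 1" and "\<mu> < 0"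
  shows "psd (X - \<mu> *\<^sub>R outer w)"
  unfolding psd_iff_qform
proof (intro conjI allI)
  show "hermitian (X - \<mu> *\<^sub>R outer w)"
    by (simp add: assms(1) hermitian_diff hermitian_scaleR hermitian_outer)
  fix v
  define c where "c = cinner w v"
  define v' where "v' = v - c *s w"
  have "cinner w w = 1" using \<open>norm w = 1\<close> by (simp add: cinner_self)
  then have orth: "cinner w v' = 0" by (simp add: v'_def cinner_diff_right cinner_smult_right c_def)
  have "qform X v = qform X (1 *s v' + c *s w)" by (simp add: v'_def)
  also have "\<dots> = qform X v' + cnj c * c * of_real \<mu>"
    using qform_orth_eigen[OF \<open>hermitian X\<close> eig \<open>norm w = 1\<close> orth, of 1 c] by simp
  finally have "Re (qform (X - \<mu> *\<^sub>R outer w) v) = Re (qform X v')"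
    by (simp add: qform_diff qform_scaleR_mat qform_outer cnj_mult_self c_def)
  then show "0 \<le> Re (qform (X - \<mu> *\<^sub>R outer w) v)"
    using nonneg_on_orth_neg_eigenvector[OF assms orth] by simp
qed

lemma ctrace_add: "ctrace (X + Y) = ctrace X + ctrace Y"
  by (simp add: ctrace_def sum.distrib)

lemma ctrace_scaleR: "ctrace (r *\<^sub>R X) = of_real r * ctrace X"
  by (simp add: ctrace_def sum_distrib_left scaleR_conv_of_real[where 'a = complex])

lemma ctrace_outer: "norm w = 1 \<Longrightarrow> ctrace (outer w) = 1"
proof -
  have "ctrace (outer w) = cnj (cinner w w)"
    by (simp add: ctrace_def outer_def cinner_def mult.commute)
  then show "norm w = 1 \<Longrightarrow> ctrace (outer w) = 1" by (simp add: cinner_self)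
qed

lemma ctrace_mult_sum: "finite S \<Longrightarrow> ctrace (X ** sum f S) = (\<Sum>j\<in>S. ctrace (X ** f j))"
  by (induction rule: finite_induct) (simp_all add: matrix_add_ldistrib ctrace_add,
      simp add: matrix_matrix_mult_def ctrace_def)

lemma meas_map_add: "meas_map Q (X + Y) = meas_map Q X + meas_map Q Y"
  by (simp add: meas_map_def ctrace_def matrix_matrix_mult_def vec_eq_iff sum.distrib ring_distribs)

lemma meas_map_diff: "meas_map Q (X - Y) = meas_map Q X - meas_map Q Y"
  by (simp add: meas_map_def ctrace_def matrix_matrix_mult_def vec_eq_iff sum_subtractf ring_distribs)

lemma meas_map_scaleR: "meas_map Q (r *\<^sub>R X) = r *\<^sub>R meas_map Q X"
  by (simp add: meas_map_def ctrace_def matrix_matrix_mult_def vec_eq_iff sum_distrib_left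
      scaleR_conv_of_real[where 'a = complex] mult.assoc)

lemma sum_meas_map_eq_trace:
  assumes "povm (Q i)"
  shows "(\<Sum>j\<in>UNIV. meas_map Q X $ i $ j) = Re (ctrace X)"
proof -
  have "(\<Sum>j\<in>UNIV. meas_map Q X $ i $ j) = Re (ctrace (X ** (\<Sum>j\<in>UNIV. Q i j)))"
    by (simp add: meas_map_def Re_sum ctrace_mult_sum)
  also have "\<dots> = Re (ctrace X)" using assms by (simp add: povm_def)
  finally show ?thesis .
qed

lemma pure_state_iff_outer: "pure_state \<sigma> \<longleftrightarrow> (\<exists>w. norm w = 1 \<and> \<sigma> = outer w)"
proof -
  have "norm w = 1 \<longleftrightarrow> (\<Sum>i\<in>UNIV. (cmod (w $ i))\<^sup>2) = 1" for w :: "complex ^ 'd"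
    by (simp add: norm_vec_def L2_set_def)
  then show ?thesis unfolding pure_state_def outer_def by blast
qed

text \<open>With \<open>w\<close> a unit eigenvector for the smallest eigenvalue of \<open>X\<close>, the matrix
  \<open>X + \<kappa> ww\<^sup>*\<close> is positive semidefinite for some \<open>\<kappa> > 0\<close>; since \<open>tr X = 0\<close>, rescaling it
  gives a state with the same measurements as the pure state \<open>ww\<^sup>*\<close>.\<close>

lemma meas_map_eq_0_imp_eq_0:
  fixes Q :: "'l::finite \<Rightarrow> 'm::finite \<Rightarrow> complex ^ 'd::finite ^ 'd"
  assumes povm: "\<forall>i. povm (Q i)" and det: "determines_pure Q" and "hermitian X"
    and nonneg_orth: "\<And>u. cinner \<psi> u = 0 \<Longrightarrow> 0 \<le> Re (qform X u)"
    and meas: "meas_map Q X = 0"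
  shows "X = 0"
proof -
  obtain w \<mu> where "norm w = 1" and eig: "X *v w = of_real \<mu> *s w"
    and min: "\<And>v. \<mu> * (norm v)\<^sup>2 \<le> Re (qform X v)"
    using hermitian_min_eigenpair[OF \<open>hermitian X\<close>] by blast
  obtain \<kappa> where "0 < \<kappa>" and psd: "psd (X + \<kappa> *\<^sub>R outer w)"
  proof (cases "\<mu> < 0")
    case True
    then show thesis
      using that[of "- \<mu>"] psd_diff_neg_eigen_outer[OF \<open>hermitian X\<close> nonneg_orth eig \<open>norm w = 1\<close>]
      by simp
  next
    case False
    then have "0 \<le> Re (qform X v)" for v using min[of v] by (smt (verit) zero_le_mult_iff zero_le_power2)
    then have "psd X" using \<open>hermitian X\<close> by (simp add: psd_iff_qform)
    then show thesis using that[of 1] by (simp add: psd_add psd_outer)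
  qed
  have "Re (ctrace X) = 0"
    using sum_meas_map_eq_trace[of Q undefined X] povm meas by simp
  then have "ctrace X = 0" using hermitian_trace_real[OF \<open>hermitian X\<close>] by simp
  define \<rho> where "\<rho> = (1 / \<kappa>) *\<^sub>R (X + \<kappa> *\<^sub>R outer w)"
  have "is_state \<rho>"
    using psd \<open>0 < \<kappa>\<close> \<open>ctrace X = 0\<close> \<open>norm w = 1\<close>
    by (simp add: is_state_def \<rho>_def psd_scaleR ctrace_add ctrace_scaleR ctrace_outer flip: of_real_mult)
  moreover have "meas_map Q \<rho> = meas_map Q (outer w)"
    using \<open>0 < \<kappa>\<close> meas by (simp add: \<rho>_def meas_map_add meas_map_scaleR)
  ultimately have "\<rho> = outer w"
    using det \<open>norm w = 1\<close> unfolding determines_pure_def pure_state_iff_outer by metis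
  moreover have "X + \<kappa> *\<^sub>R outer w = \<kappa> *\<^sub>R \<rho>"
    using \<open>0 < \<kappa>\<close> by (simp add: \<rho>_def)
  ultimately show "X = 0" by simp
qed

section \<open>Norms on finite-dimensional spaces\<close>

lemma is_norm_on_sum_le:
  assumes N: "is_norm_on S N" and "subspace S" and "finite I"
  shows "(\<And>i. i \<in> I \<Longrightarrow> f i \<in> S) \<Longrightarrow> N (sum f I) \<le> (\<Sum>i\<in>I. N (f i))"
  using \<open>finite I\<close>
proof (induction rule: finite_induct)
  case empty
  have "N 0 = 0" using N subspace_0[OF \<open>subspace S\<close>] unfolding is_norm_on_def by blast
  then show ?case by simp
next
  case (insert x F)
  have "f x \<in> S" and "sum f F \<in> S"
    using insert.prems subspace_sum[OF \<open>subspace S\<close>, of F f] by auto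
  then have "N (f x + sum f F) \<le> N (f x) + N (sum f F)"
    using N unfolding is_norm_on_def by blast
  also have "\<dots> \<le> N (f x) + (\<Sum>i\<in>F. N (f i))"
    using insert.IH insert.prems by simp
  finally show ?case using insert.hyps by simp
qed

text \<open>The linear retraction \<open>g\<close> onto \<open>S\<close> lets us expand elements of \<open>S\<close> along the
  standard basis without leaving \<open>S\<close>.\<close>

lemma is_norm_on_le_norm:
  fixes N :: "'a::euclidean_space \<Rightarrow> real"
  assumes N: "is_norm_on S N" and "subspace S"
    and "linear g" and g_into: "\<And>z. g z \<in> S" and g_id: "\<And>x. x \<in> S \<Longrightarrow> g x = x"
  shows "\<exists>K\<ge>0. \<forall>x\<in>S. N x \<le> K * norm x"
proof (intro exI conjI ballI)
  have N_nonneg: "\<And>y. y \<in> S \<Longrightarrow> 0 \<le> N y" using N unfolding is_norm_on_def by blast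
  show "0 \<le> (\<Sum>b\<in>Basis. N (g b))" by (intro sum_nonneg N_nonneg g_into)
  fix x assume "x \<in> S"
  have "x = (\<Sum>b\<in>Basis. g ((x \<bullet> b) *\<^sub>R b))"
    using g_id[OF \<open>x \<in> S\<close>] by (metis euclidean_representation linear_sum[OF \<open>linear g\<close>])
  then have "N x \<le> (\<Sum>b\<in>Basis. N (g ((x \<bullet> b) *\<^sub>R b)))"
    using is_norm_on_sum_le[OF N \<open>subspace S\<close>] g_into by (metis finite_Basis)
  also have "\<dots> = (\<Sum>b\<in>Basis. \<bar>x \<bullet> b\<bar> * N (g b))"
    using N g_into unfolding is_norm_on_def by (simp add: linear_scale[OF \<open>linear g\<close>])
  also have "\<dots> \<le> (\<Sum>b\<in>Basis. norm x * N (g b))"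
    by (intro sum_mono mult_right_mono Basis_le_norm N_nonneg g_into)
  also have "\<dots> = (\<Sum>b\<in>Basis. N (g b)) * norm x" by (simp add: sum_distrib_left mult.commute)
  finally show "N x \<le> (\<Sum>b\<in>Basis. N (g b)) * norm x" .
qed

lemma is_norm_on_UNIV_lipschitz:
  fixes N :: "'a::euclidean_space \<Rightarrow> real"
  assumes N: "is_norm_on UNIV N"
  shows "\<exists>K. K-lipschitz_on UNIV N"
proof -
  obtain K where "0 \<le> K" and K: "\<And>x. N x \<le> K * norm x"
    using is_norm_on_le_norm[OF N subspace_UNIV linear_id] by auto
  have tri: "N (x + y) \<le> N x + N y" for x y using N unfolding is_norm_on_def by blast
  have sym: "N (y - x) = N (x - y)" for x y
  proof -
    have "N ((- 1) *\<^sub>R (x - y)) = \<bar>- 1\<bar> * N (x - y)" using N unfolding is_norm_on_def by blast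
    then show ?thesis by simp
  qed
  have "dist (N x) (N y) \<le> K * dist x y" for x y
  proof -
    have "N x \<le> N y + N (x - y)" using tri[of y "x - y"] by simp
    moreover have "N y \<le> N x + N (x - y)" using tri[of x "y - x"] sym[of x y] by simp
    ultimately show ?thesis using K[of "x - y"] by (simp add: dist_real_def dist_norm)
  qed
  with \<open>0 \<le> K\<close> show ?thesis by (blast intro: lipschitz_onI)
qed

lemma is_norm_on_UNIV_continuous_on:
  fixes N :: "'a::euclidean_space \<Rightarrow> real"
  assumes "is_norm_on UNIV N"
  shows "continuous_on S N"
  using is_norm_on_UNIV_lipschitz[OF assms] lipschitz_on_continuous_on lipschitz_on_subset
  by (metis subset_UNIV)

definition hermitian_part :: "complex ^ 'd::finite ^ 'd \<Rightarrow> complex ^ 'd ^ 'd" where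
  "hermitian_part Z = (\<chi> i j. (Z $ i $ j + cnj (Z $ j $ i)) / 2)"

lemma is_norm_on_hermitian_le_norm:
  fixes NH :: "complex ^ 'd::finite ^ 'd \<Rightarrow> real"
  assumes "is_norm_on {X. hermitian X} NH"
  shows "\<exists>K\<ge>0. \<forall>X. hermitian X \<longrightarrow> NH X \<le> K * norm X"
proof -
  have "subspace {X :: complex ^ 'd ^ 'd. hermitian X}"
    by (auto simp: subspace_def hermitian_add hermitian_scaleR) (simp add: hermitian_def)
  moreover have "linear hermitian_part"
    by (rule linearI)
      (simp_all add: hermitian_part_def vec_eq_iff scaleR_conv_of_real[where 'a = complex] field_simps)
  moreover have "hermitian (hermitian_part Z)" for Z
    by (simp add: hermitian_def hermitian_part_def add.commute)
  moreover have "hermitian_part X = X" if "hermitian X" for X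
    using that by (simp add: hermitian_part_def vec_eq_iff)
      (metis hermitianD)
  ultimately show ?thesis using is_norm_on_le_norm[OF assms] by auto
qed

section \<open>Stability of the measurement map\<close>

text \<open>For a unit vector \<open>\<psi>\<close>, the vectors \<open>u - \<langle>\<psi>, u\<rangle> \<psi>\<close> exhaust the orthogonal complement
  of \<open>\<psi>\<close>; quantifying over all \<open>u\<close> instead makes the set of pairs \<open>(\<psi>, X)\<close> closed.\<close>

definition psd_on_orth :: "complex ^ 'd::finite \<Rightarrow> complex ^ 'd ^ 'd \<Rightarrow> bool" where
  "psd_on_orth \<psi> X \<longleftrightarrow> (\<forall>u. 0 \<le> Re (qform X (u - cinner \<psi> u *s \<psi>)))"

lemma psd_on_orthD: "psd_on_orth \<psi> X \<Longrightarrow> cinner \<psi> u = 0 \<Longrightarrow> 0 \<le> Re (qform X u)"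
  unfolding psd_on_orth_def by (metis diff_zero vector_smult_lzero)

lemma psd_on_orth_scaleR: "psd_on_orth \<psi> X \<Longrightarrow> 0 \<le> r \<Longrightarrow> psd_on_orth \<psi> (r *\<^sub>R X)"
  unfolding psd_on_orth_def by (simp add: qform_scaleR_mat)

lemma closed_psd_on_orth_pairs:
  "closed {p :: (complex ^ 'd::finite) \<times> (complex ^ 'd ^ 'd). hermitian (snd p) \<and> psd_on_orth (fst p) (snd p)}"
proof -
  have "closed {p :: (complex ^ 'd) \<times> (complex ^ 'd ^ 'd). \<forall>i j. snd p $ i $ j = cnj (snd p $ j $ i)}"
    by (intro closed_Collect_all closed_Collect_eq continuous_intros)
  moreover have "closed {p :: (complex ^ 'd) \<times> (complex ^ 'd ^ 'd).
      \<forall>u. 0 \<le> Re (qform (snd p) (u - cinner (fst p) u *s fst p))}"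
    unfolding qform_def cinner_def matrix_vector_mult_def vector_scalar_mult_def
    by (intro closed_Collect_all closed_Collect_le continuous_intros)
  ultimately show ?thesis
    unfolding hermitian_def psd_on_orth_def Collect_conj_eq by (rule closed_Int)
qed

lemma compact_continuous_pos_imp_bounded_below:
  fixes F :: "'a::topological_space \<Rightarrow> real"
  assumes "compact S" and "continuous_on S F" and "\<And>x. x \<in> S \<Longrightarrow> 0 < F x"
  shows "\<exists>c>0. \<forall>x\<in>S. c \<le> F x"
proof (cases "S = {}")
  case False
  then obtain x0 where "x0 \<in> S" "\<forall>x\<in>S. F x0 \<le> F x"
    using continuous_attains_inf[OF assms(1) False assms(2)] by blast
  then show ?thesis using assms(3) by blast
qed (auto intro: exI[of _ 1])

lemma meas_map_lower_bound:
  fixes Q :: "'l::finite \<Rightarrow> 'm::finite \<Rightarrow> complex ^ 'd::finite ^ 'd"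
    and Nm :: "real ^ 'm ^ 'l \<Rightarrow> real"
  assumes Nm: "is_norm_on UNIV Nm" and povm: "\<forall>i. povm (Q i)" and det: "determines_pure Q"
  shows "\<exists>c>0. \<forall>\<psi> X. norm \<psi> = 1 \<longrightarrow> hermitian X \<longrightarrow> psd_on_orth \<psi> X \<longrightarrow>
           c * norm X \<le> Nm (meas_map Q X)"
proof -
  define S where "S = (sphere 0 1 \<times> sphere 0 1) \<inter>
    {p :: (complex ^ 'd) \<times> (complex ^ 'd ^ 'd). hermitian (snd p) \<and> psd_on_orth (fst p) (snd p)}"
  have "compact S"
    unfolding S_def by (intro compact_Int_closed compact_Times compact_sphere closed_psd_on_orth_pairs)
  moreover have "continuous_on S (\<lambda>p. Nm (meas_map Q (snd p)))"
  proof -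
    have "continuous_on S (\<lambda>p. meas_map Q (snd p))"
      unfolding meas_map_def ctrace_def matrix_matrix_mult_def
      by (simp only: vec_lambda_beta) (intro continuous_intros)
    then show ?thesis
      using continuous_on_compose2[OF is_norm_on_UNIV_continuous_on[OF Nm, of UNIV]] by simp
  qed
  moreover have "0 < Nm (meas_map Q (snd p))" if "p \<in> S" for p
  proof -
    have "snd p \<noteq> 0" and "hermitian (snd p)" and "psd_on_orth (fst p) (snd p)"
      using that by (auto simp: S_def)
    then have "meas_map Q (snd p) \<noteq> 0"
      using meas_map_eq_0_imp_eq_0[OF povm det] psd_on_orthD by blast
    then show ?thesis using Nm unfolding is_norm_on_def by (metis UNIV_I order_less_le)
  qed
  ultimately have "\<exists>c>0. \<forall>p\<in>S. c \<le> Nm (meas_map Q (snd p))"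
    by (rule compact_continuous_pos_imp_bounded_below)
  then obtain c where "c > 0" and c: "\<And>p. p \<in> S \<Longrightarrow> c \<le> Nm (meas_map Q (snd p))"
    by blast
  have "c * norm X \<le> Nm (meas_map Q X)"
    if "norm \<psi> = 1" "hermitian X" "psd_on_orth \<psi> X" for \<psi> X
  proof (cases "X = 0")
    case True
    have "Nm 0 = 0" using Nm unfolding is_norm_on_def by blast
    then show ?thesis using True meas_map_scaleR[of Q 0 X] by simp
  next
    case False
    have unit: "(\<psi>, (1 / norm X) *\<^sub>R X) \<in> S"
      using that False by (simp add: S_def hermitian_scaleR psd_on_orth_scaleR)
    have "c \<le> Nm ((1 / norm X) *\<^sub>R meas_map Q X)" using c[OF unit] by (simp add: meas_map_scaleR)
    also have "\<dots> = Nm (meas_map Q X) / norm X"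
      using Nm unfolding is_norm_on_def by simp
    finally show ?thesis using False by (simp add: field_simps)
  qed
  then show ?thesis using \<open>c > 0\<close> by blast
qed

lemma psd_on_orth_diff_outer:
  assumes "psd Y" and "norm w = 1"
  shows "psd_on_orth w (Y - outer w)"
  unfolding psd_on_orth_def
proof
  fix u
  have "cinner w (u - cinner w u *s w) = 0"
    using \<open>norm w = 1\<close> by (simp add: cinner_diff_right cinner_smult_right cinner_self)
  then show "0 \<le> Re (qform (Y - outer w) (u - cinner w u *s w))"
    using \<open>psd Y\<close> by (simp add: psd_iff_qform qform_diff qform_outer)
qed

lemma sdp_feasible_near_pure_state:
  fixes Q :: "'l::finite \<Rightarrow> 'm::finite \<Rightarrow> complex ^ 'd::finite ^ 'd"
    and NH :: "complex ^ 'd ^ 'd \<Rightarrow> real"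
    and Nm :: "real ^ 'm ^ 'l \<Rightarrow> real"
  assumes NH: "is_norm_on {X. hermitian X} NH" and Nm: "is_norm_on UNIV Nm"
    and povm: "\<forall>i. povm (Q i)" and det: "determines_pure Q"
  shows "\<exists>C>0. \<forall>\<epsilon> \<sigma> f Y. pure_state \<sigma> \<longrightarrow> Nm f \<le> \<epsilon> \<longrightarrow>
           sdp_feasible Q Nm (meas_map Q \<sigma> + f) \<epsilon> Y \<longrightarrow> NH (Y - \<sigma>) \<le> C * \<epsilon>"
proof -
  obtain K where "0 \<le> K" and K: "\<And>X. hermitian X \<Longrightarrow> NH X \<le> K * norm X"
    using is_norm_on_hermitian_le_norm[OF NH] by blast
  obtain c where "0 < c" and c: "\<And>\<psi> X. norm \<psi> = 1 \<Longrightarrow> hermitian X \<Longrightarrow> psd_on_orth \<psi> X \<Longrightarrow>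
      c * norm X \<le> Nm (meas_map Q X)"
    using meas_map_lower_bound[OF Nm povm det] by blast
  have "NH (Y - \<sigma>) \<le> 2 * (K + 1) / c * \<epsilon>"
    if "pure_state \<sigma>" "Nm f \<le> \<epsilon>" "sdp_feasible Q Nm (meas_map Q \<sigma> + f) \<epsilon> Y" for \<epsilon> \<sigma> f Y
  proof -
    obtain w where "norm w = 1" and \<sigma>: "\<sigma> = outer w"
      using \<open>pure_state \<sigma>\<close> pure_state_iff_outer by blast
    have "hermitian Y" "psd Y" and fit: "Nm (meas_map Q Y - (meas_map Q \<sigma> + f)) \<le> \<epsilon>"
      using that(3) by (auto simp: sdp_feasible_def)
    have herm: "hermitian (Y - \<sigma>)" using \<open>hermitian Y\<close> by (simp add: \<sigma> hermitian_diff hermitian_outer)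
    have "meas_map Q (Y - \<sigma>) = (meas_map Q Y - (meas_map Q \<sigma> + f)) + f"
      by (simp add: meas_map_diff)
    then have "Nm (meas_map Q (Y - \<sigma>)) \<le> 2 * \<epsilon>"
      using Nm fit \<open>Nm f \<le> \<epsilon>\<close> unfolding is_norm_on_def by (smt (verit) UNIV_I)
    then have "c * norm (Y - \<sigma>) \<le> 2 * \<epsilon>"
      using c[OF \<open>norm w = 1\<close> herm] psd_on_orth_diff_outer[OF \<open>psd Y\<close> \<open>norm w = 1\<close>] \<sigma> by force
    then have "norm (Y - \<sigma>) \<le> 2 * \<epsilon> / c" using \<open>0 < c\<close> by (simp add: field_simps)
    have "NH (Y - \<sigma>) \<le> K * norm (Y - \<sigma>)" by (rule K[OF herm])
    also have "\<dots> \<le> (K + 1) * norm (Y - \<sigma>)" by (simp add: distrib_right)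
    also have "\<dots> \<le> (K + 1) * (2 * \<epsilon> / c)"
      using \<open>0 \<le> K\<close> \<open>norm (Y - \<sigma>) \<le> 2 * \<epsilon> / c\<close> by (intro mult_left_mono) simp_all
    also have "\<dots> = 2 * (K + 1) / c * \<epsilon>" by simp
    finally show ?thesis .
  qed
  moreover have "0 < 2 * (K + 1) / c" using \<open>0 \<le> K\<close> \<open>0 < c\<close> by simp
  ultimately show ?thesis by blast
qed

theorem theorem3:
  fixes Q :: "'l::finite \<Rightarrow> 'm::finite \<Rightarrow> complex ^ 'd::finite ^ 'd"
    and NH :: "complex ^ 'd ^ 'd \<Rightarrow> real"
    and Nm :: "real ^ 'm ^ 'l \<Rightarrow> real"
  assumes "is_norm_on {X. hermitian X} NH"
    and "is_norm_on UNIV Nm"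
    and "\<forall>i. povm (Q i)"
    and "determines_pure Q"
  shows "\<exists>C>0. \<forall>\<epsilon>>0. \<forall>\<sigma> f Y. pure_state \<sigma> \<longrightarrow> Nm f \<le> \<epsilon> \<longrightarrow>
           sdp_minimizer Q Nm (meas_map Q \<sigma> + f) \<epsilon> Y \<longrightarrow> NH (Y - \<sigma>) \<le> C * \<epsilon>"
  using sdp_feasible_near_pure_state[OF assms] unfolding sdp_minimizer_def by blast

end
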